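(* If $X\subseteq\mathbb{R}^n_\infty$ is compact, then $\mathcal{F}(X)$ is compact.
   Context: $\mathbb{R}^n_\infty$ is $\mathbb{R}^n$ with the $\ell^\infty$-metric. For $1\le i\le n$, $\Lambda_i=\{x:x_i=\|x\|_\infty\}$ and $p+\xi\Lambda_i=\{p+\xi z:z\in\Lambda_i\}$ for $\xi\in\{\pm1\}$. $\mathcal{F}(X)$ is the set of points $p\in\mathbb{R}^n$ such that $(p+\xi\Lambda_i)\cap X\ne\emptyset$ for every $i\in\{1,\dots,n\}$ and $\xi\in\{\pm1\}$. *)

theory Defs
  imports "HOL-Analysis.Analysis"
begin

definition sup_norm :: "real ^ 'n \<Rightarrow> real" where
  "sup_norm x = Max (range (\<lambda>i. \<bar>x $ i\<bar>))"

definition Lambda_cone :: "'n \<Rightarrow> (real ^ 'n) set" where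
  "Lambda_cone i = {x. x $ i = sup_norm x}"

definition shifted_cone :: "real ^ 'n \<Rightarrow> real \<Rightarrow> 'n \<Rightarrow> (real ^ 'n) set" where
  "shifted_cone p \<xi> i = {p + \<xi> *\<^sub>R z | z. z \<in> Lambda_cone i}"

definition F_set :: "(real ^ 'n::finite) set \<Rightarrow> (real ^ 'n) set" where
  "F_set X = {p. \<forall>i. \<forall>\<xi>\<in>{1, -1}. shifted_cone p \<xi> i \<inter> X \<noteq> {}}"

end

theory Submission
  imports Defs
begin

(* Each condition "p + xi Lambda_i meets X" says that p lies in the projection, along the compact
   factor X, of a closed subset of X \<times> R^n; so F(X) is closed. Since every point of Lambda_i has a
   nonnegative i-th coordinate, the two conditions for i trap p_i between the i-th coordinates of
   two points of X; so F(X) lies in every coordinate box containing X and is bounded. *)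

lemma mem_Lambda_cone_iff: "z \<in> Lambda_cone i \<longleftrightarrow> (\<forall>j. \<bar>z $ j\<bar> \<le> z $ i)"
proof -
  have "z $ i \<in> range (\<lambda>j. \<bar>z $ j\<bar>)" if "\<forall>j. \<bar>z $ j\<bar> \<le> z $ i"
    using that abs_ge_self [of "z $ i"] by (metis antisym rangeI)
  then show ?thesis
    unfolding Lambda_cone_def sup_norm_def mem_Collect_eq
    by (subst eq_commute, subst Max_eq_iff) auto
qed

lemma Lambda_cone_nonneg: "z \<in> Lambda_cone i \<Longrightarrow> 0 \<le> z $ i"
  by (metis abs_ge_zero mem_Lambda_cone_iff order_trans)

lemma closed_Lambda_cone: "closed (Lambda_cone i)"
proof -
  have "Lambda_cone i = {z. \<forall>j. \<bar>z $ j\<bar> \<le> z $ i}"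
    by (simp add: set_eq_iff mem_Lambda_cone_iff)
  then show ?thesis
    by (simp add: closed_Collect_all closed_Collect_le continuous_intros)
qed

lemma shifted_cone_meets_iff:
  assumes "\<bar>\<xi>\<bar> = 1"
  shows "shifted_cone p \<xi> i \<inter> X \<noteq> {} \<longleftrightarrow> (\<exists>x\<in>X. \<xi> *\<^sub>R (x - p) \<in> Lambda_cone i)"
proof -
  have "\<xi> * \<xi> = 1"
    using assms abs_mult_self [of \<xi>] by simp
  then have "x = p + \<xi> *\<^sub>R z \<longleftrightarrow> z = \<xi> *\<^sub>R (x - p)" for x z
    by (metis add_diff_cancel_left' diff_add_cancel scaleR_one scaleR_scaleR)
  then show ?thesis
    unfolding shifted_cone_def by auto
qed

lemma F_set_eq:
  "F_set X = (\<Inter>i. \<Inter>\<xi>\<in>{1, -1}. {p. \<exists>x\<in>X. \<xi> *\<^sub>R (x - p) \<in> Lambda_cone i})"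
  unfolding F_set_def by (auto simp: shifted_cone_meets_iff)

lemma closed_F_set:
  fixes X :: "(real ^ 'n::finite) set"
  assumes "compact X"
  shows "closed (F_set X)"
proof -
  have "closed {p. \<exists>x\<in>X. \<xi> *\<^sub>R (x - p) \<in> Lambda_cone i}" for \<xi> and i :: 'n
  proof -
    have "closed ((\<lambda>(x, p). \<xi> *\<^sub>R (x - p)) -` Lambda_cone i)"
      by (simp add: closed_vimage closed_Lambda_cone case_prod_unfold continuous_intros)
    from closed_compact_projection [OF assms this] show ?thesis
      by (simp add: Bex_def)
  qed
  then show ?thesis
    unfolding F_set_eq by (intro closed_INT ballI)
qed

lemma F_set_subset_cbox:
  assumes "X \<subseteq> cbox a b"
  shows "F_set X \<subseteq> cbox a b"
proof
  fix p assume p: "p \<in> F_set X"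
  have "a $ i \<le> p $ i \<and> p $ i \<le> b $ i" for i
  proof -
    from p obtain x y where "x \<in> X" "x - p \<in> Lambda_cone i" "y \<in> X" "-(y - p) \<in> Lambda_cone i"
      unfolding F_set_eq by fastforce
    then have "p $ i \<le> x $ i" "y $ i \<le> p $ i" "a $ i \<le> y $ i" "x $ i \<le> b $ i"
      using assms Lambda_cone_nonneg by (fastforce simp: mem_box_cart)+
    then show ?thesis by linarith
  qed
  then show "p \<in> cbox a b"
    by (simp add: mem_box_cart)
qed

theorem proposition5p7:
  fixes X :: "(real ^ 'n::finite) set"
  assumes "compact X"
  shows "compact (F_set X)"
proof -
  obtain a where "X \<subseteq> cbox (-a) a"
    using bounded_subset_cbox_symmetric compact_imp_bounded assms by blast
  then have "bounded (F_set X)"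
    by (meson F_set_subset_cbox bounded_cbox bounded_subset)
  with closed_F_set [OF assms] show ?thesis
    by (simp add: compact_eq_bounded_closed)
qed

end
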